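(* Under the setup below, for every $\mathbf{z}\in\mathbb{R}^V$, \[\mathbf{M}\mathbf{z}=\mathbf{W}^{1/2}\mathbf{B}\,\mathbf{\Pi}^{(0)\top}\cdots\mathbf{\Pi}^{(\eta-1)\top}\mathbf{z}.\]
   Context: Setup. Let $G=(V,E)$ be a connected undirected graph with $|V|=n$ and $m$ edges (parallel edges allowed), positive edge weights $\mathbf{w}$, $\mathbf{W}=\mathrm{diag}(\mathbf{w})$, signed edge–vertex incidence matrix $\mathbf{B}\in\mathbb{R}^{E\times V}$; for a region (edge-induced subgraph) $H$, $\mathbf{B}[H]$ is $\mathbf{B}$ with rows of edges not in $E(H)$ set to zero. All matrices are padded with zeros to act on $\mathbb{R}^V$ (or map into $\mathbb{R}^E$); $\mathbf{I}$ is the $n\times n$ identity and $\mathbf{I}_S$ the diagonal $0/1$ matrix of $S\subseteq V$; $\mathbf{M}_{S,T}$ is the submatrix with rows $S$, columns $T$ (padded); $\mathbf{M}^{-1}$ is the Moore–Penrose pseudoinverse if singular. Separator tree. A separator tree $\mathcal{T}$ of $G$ is a rooted binary tree whose nodes are regions $H$ of $G$, each storing vertex sets $\partial H$ (boundary), $S(H)$ (separator), $F_H$ (eliminated vertices), defined top-down: the root is $H=G$ with $\partial G=\emptyset$ and $F_G=S(G)$. A non-leaf node $H$ has exactly two children $D_1,D_2$ whose edge sets partition $E(H)$, with no isolated vertices, and $V(D_1)\cap V(D_2)=S(H)$; then $\partial D_j=(\partial H\cup S(H))\cap V(D_j)$ for $j=1,2$, and $F_H=S(H)\setminus\partial H$.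 A node with a constant number of edges is a leaf, with $S(H)=\emptyset$ and $F_H=V(H)\setminus\partial H$. The level $\eta(H)$ of a node is the maximum number of edges on a tree path from $H$ down to a descendant (leaves have level 0); $\eta$ is the maximum level (height); $\mathcal{T}(i)$ is the set of nodes at level $i$. The sets $\{F_H\}_{H\in\mathcal{T}}$ partition $V$. Operators. For each node $H$ let $\mathbf{L}^{(H)}$ be a given Laplacian supported on $\partial H\cup F_H$; $\mathbf{X}^{(H)}=\mathbf{L}^{(H)}_{\partial H,F_H}(\mathbf{L}^{(H)}_{F_H,F_H})^{-1}$; $\mathbf{\Pi}^{(i)}=\mathbf{I}-\sum_{H\in\mathcal{T}(i)}\mathbf{X}^{(H)}$ for $0\le i\le\eta-1$. Slack tree operator. For a node $H$ with parent $P$, the edge operator is $\mathbf{M}_{(H,P)}=\mathbf{I}_{\partial H\cup F_H}-(\mathbf{L}^{(H)}_{F_H,F_H})^{-1}\mathbf{L}^{(H)}_{F_H,\partial H}=\mathbf{I}_{\partial H\cup F_H}-\mathbf{X}^{(H)\top}$. For a leaf $H$, the leaf operator is $\mathbf{J}_H=\mathbf{W}^{1/2}\mathbf{B}[H]$. For a leaf $H$ and a node $A$ that is $H$ or an ancestor of $H$, with tree path $H=H_1,H_2,\dots,H_t=A$ ($H_{j+1}$ the parent of $H_j$), let $\mathbf{M}_{H\leftarrow A}=\mathbf{M}_{(H_1,H_2)}\mathbf{M}_{(H_2,H_3)}\cdots\mathbf{M}_{(H_{t-1},H_t)}$ (the identity if $t=1$). Then $\mathbf{M}=\sum_{\text{leaf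 }H,\ \text{node }A:\ H\text{ in the subtree of }A}\mathbf{J}_H\mathbf{M}_{H\leftarrow A}\mathbf{I}_{F_A}$. *)

theory Defs
  imports "HOL-Analysis.Analysis"
begin

text \<open>Graph: vertices = UNIV :: 'v (finite type), edges = UNIV :: 'e (finite type,
 parallel edges allowed); edge e is oriented from fst (ends e) to snd (ends e).
 Matrices are HOL-Analysis matrices real^'cols^'rows, so real^'v^'e has rows indexed by edges.\<close>

definition verts :: "('e \<Rightarrow> 'v \<times> 'v) \<Rightarrow> 'e set \<Rightarrow> 'v set" where
  "verts ends Es = fst ` ends ` Es \<union> snd ` ends ` Es"

definition graph_connected :: "('e \<Rightarrow> 'v \<times> 'v) \<Rightarrow> bool" where
  "graph_connected ends \<longleftrightarrow>
     (let A = range ends \<union> converse (range ends) in \<forall>u v. (u, v) \<in> A\<^sup>*)"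

definition incidence :: "('e \<Rightarrow> 'v \<times> 'v) \<Rightarrow> real^'v^'e" where
  "incidence ends = (\<chi> e v. if v = fst (ends e) then 1 else if v = snd (ends e) then -1 else 0)"

definition incidence_on :: "('e \<Rightarrow> 'v \<times> 'v) \<Rightarrow> 'e set \<Rightarrow> real^'v^'e" where
  "incidence_on ends Es = (\<chi> e v. if e \<in> Es then incidence ends $ e $ v else 0)"

definition sqrtW :: "('e \<Rightarrow> real) \<Rightarrow> real^'e^'e" where
  "sqrtW w = (\<chi> e f. if e = f then sqrt (w e) else 0)"

definition idS :: "'v set \<Rightarrow> real^'v^'v" where
  "idS S = (\<chi> i j. if i = j \<and> i \<in> S then 1 else 0)"

definition submat :: "real^'v^'v \<Rightarrow> 'v set \<Rightarrow> 'v set \<Rightarrow> real^'v^'v" where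
  "submat M S T = (\<chi> i j. if i \<in> S \<and> j \<in> T then M $ i $ j else 0)"

text \<open>Moore--Penrose pseudoinverse (coincides with the inverse when nonsingular)\<close>
definition is_pinv :: "real^'v^'v \<Rightarrow> real^'v^'v \<Rightarrow> bool" where
  "is_pinv A X \<longleftrightarrow> A ** X ** A = A \<and> X ** A ** X = X \<and>
     transpose (A ** X) = A ** X \<and> transpose (X ** A) = X ** A"

definition pinv :: "real^'v^'v \<Rightarrow> real^'v^'v" where
  "pinv A = (THE X. is_pinv A X)"

definition laplacian_on :: "'v set \<Rightarrow> real^'v^'v \<Rightarrow> bool" where
  "laplacian_on S L \<longleftrightarrow> transpose L = L \<and>
     (\<forall>i j. i \<noteq> j \<longrightarrow> L $ i $ j \<le> 0) \<and>
     (\<forall>i. (\<Sum>j\<in>UNIV. L $ i $ j) = 0) \<and>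
     (\<forall>i j. (i \<notin> S \<or> j \<notin> S) \<longrightarrow> L $ i $ j = 0)"

text \<open>Separator tree: a leaf stores its region (edge set); an inner node stores its region,
 its separator S(H) and its two children.  Boundaries and eliminated sets are computed top-down.\<close>
datatype ('v, 'e) stree = SLeaf "'e set" | SNode "'e set" "'v set" "('v, 'e) stree" "('v, 'e) stree"

fun region :: "('v, 'e) stree \<Rightarrow> 'e set" where
  "region (SLeaf Es) = Es"
| "region (SNode Es S D1 D2) = Es"

fun sep_wf :: "('e \<Rightarrow> 'v \<times> 'v) \<Rightarrow> ('v, 'e) stree \<Rightarrow> bool" where
  "sep_wf ends (SLeaf Es) = True"
| "sep_wf ends (SNode Es S D1 D2) =
     (region D1 \<union> region D2 = Es \<and> region D1 \<inter> region D2 = {} \<and>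
      region D1 \<noteq> {} \<and> region D2 \<noteq> {} \<and>
      verts ends (region D1) \<inter> verts ends (region D2) = S \<and>
      sep_wf ends D1 \<and> sep_wf ends D2)"

definition separator_tree :: "('e \<Rightarrow> 'v \<times> 'v) \<Rightarrow> ('v, 'e) stree \<Rightarrow> bool" where
  "separator_tree ends T \<longleftrightarrow> region T = UNIV \<and> sep_wf ends T"

fun lvl :: "('v, 'e) stree \<Rightarrow> nat" where
  "lvl (SLeaf Es) = 0"
| "lvl (SNode Es S D1 D2) = Suc (max (lvl D1) (lvl D2))"

fun elim :: "('e \<Rightarrow> 'v \<times> 'v) \<Rightarrow> 'v set \<Rightarrow> ('v, 'e) stree \<Rightarrow> 'v set" where
  "elim ends bd (SLeaf Es) = verts ends Es - bd"
| "elim ends bd (SNode Es S D1 D2) = S - bd"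

definition child_bd :: "('e \<Rightarrow> 'v \<times> 'v) \<Rightarrow> 'v set \<Rightarrow> 'v set \<Rightarrow> ('v, 'e) stree \<Rightarrow> 'v set" where
  "child_bd ends bd S D = (bd \<union> S) \<inter> verts ends (region D)"

fun nodes :: "('e \<Rightarrow> 'v \<times> 'v) \<Rightarrow> 'v set \<Rightarrow> ('v, 'e) stree \<Rightarrow> ('v set \<times> ('v, 'e) stree) list" where
  "nodes ends bd (SLeaf Es) = [(bd, SLeaf Es)]"
| "nodes ends bd (SNode Es S D1 D2) =
     (bd, SNode Es S D1 D2) # nodes ends (child_bd ends bd S D1) D1 @ nodes ends (child_bd ends bd S D2) D2"

text \<open>X^(H) = L_{\<partial>H,F_H} (L_{F_H,F_H})^{-1}; the Laplacian of node H is L (region H)\<close>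
definition Xop :: "('e \<Rightarrow> 'v \<times> 'v) \<Rightarrow> ('e set \<Rightarrow> real^'v^'v) \<Rightarrow> 'v set \<Rightarrow> ('v, 'e) stree \<Rightarrow> real^'v^'v" where
  "Xop ends L bd H = submat (L (region H)) bd (elim ends bd H) **
                     pinv (submat (L (region H)) (elim ends bd H) (elim ends bd H))"

definition PiOp :: "('e \<Rightarrow> 'v \<times> 'v) \<Rightarrow> ('e set \<Rightarrow> real^'v^'v) \<Rightarrow> ('v, 'e) stree \<Rightarrow> nat \<Rightarrow> real^'v^'v" where
  "PiOp ends L T i = mat 1 - sum_list [Xop ends L bd H. (bd, H) \<leftarrow> nodes ends {} T, lvl H = i]"

definition Medge :: "('e \<Rightarrow> 'v \<times> 'v) \<Rightarrow> ('e set \<Rightarrow> real^'v^'v) \<Rightarrow> 'v set \<Rightarrow> ('v, 'e) stree \<Rightarrow> real^'v^'v" where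
  "Medge ends L bd H = idS (bd \<union> elim ends bd H) - transpose (Xop ends L bd H)"

text \<open>for the subtree rooted at A (boundary bd): list of (E(H), M_{H<-A}) over its leaves H\<close>
fun down :: "('e \<Rightarrow> 'v \<times> 'v) \<Rightarrow> ('e set \<Rightarrow> real^'v^'v) \<Rightarrow> 'v set \<Rightarrow> ('v, 'e) stree \<Rightarrow> ('e set \<times> (real^'v^'v)) list" where
  "down ends L bd (SLeaf Es) = [(Es, mat 1)]"
| "down ends L bd (SNode Es S D1 D2) =
     map (\<lambda>(H, P). (H, P ** Medge ends L (child_bd ends bd S D1) D1)) (down ends L (child_bd ends bd S D1) D1) @
     map (\<lambda>(H, P). (H, P ** Medge ends L (child_bd ends bd S D2) D2)) (down ends L (child_bd ends bd S D2) D2)"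

definition Jleaf :: "('e \<Rightarrow> 'v \<times> 'v) \<Rightarrow> ('e \<Rightarrow> real) \<Rightarrow> 'e set \<Rightarrow> real^'v^'e" where
  "Jleaf ends w Es = sqrtW w ** incidence_on ends Es"

definition slack_op :: "('e \<Rightarrow> 'v \<times> 'v) \<Rightarrow> ('e \<Rightarrow> real) \<Rightarrow> ('e set \<Rightarrow> real^'v^'v) \<Rightarrow> ('v, 'e) stree \<Rightarrow> real^'v^'e" where
  "slack_op ends w L T =
     sum_list [sum_list [Jleaf ends w H ** P ** idS (elim ends bd A). (H, P) \<leftarrow> down ends L bd A].
               (bd, A) \<leftarrow> nodes ends {} T]"

end

theory Submission
  imports Defs
begin

text \<open>Write Y(H) for the transpose of X(H).  Its rows live on F(H) and its columns on the
  boundary of H; the sets F(H) are pairwise disjoint, and the boundary of H meets F(H') only for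
  proper ancestors H' of H.  Hence in u = Pi(0)^T ... Pi(eta-1)^T z the F(H)-coordinates change
  exactly once, at level eta(H), and at that moment the boundary coordinates already have their
  final value; this yields I_F(H) u = I_F(H) z - Y(H) u for every node.  On the other side M is
  the sum over nodes A of K(A) I_F(A) z with K(A) = sum of J_H M_(H<-A) over the leaves below A, and by
  the node identity the edge operator of a child D sends I_(bd A \<union> F A) u to I_(bd D) u - Y(D) u.
  An induction down the tree therefore telescopes M z into the sum of J_H u, which is W^1/2 B u.\<close>

section \<open>Moore--Penrose pseudoinverse of a symmetric matrix\<close>

lemma symmetric_matrix_inner:
  fixes A :: "real^'n^'n"
  assumes "transpose A = A"
  shows "(A *v x) \<bullet> y = x \<bullet> (A *v y)"
  by (metis assms dot_lmul_matrix transpose_matrix_vector)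

lemma symmetric_matrixI:
  fixes A :: "real^'n^'n"
  assumes "\<And>x y. (A *v x) \<bullet> y = x \<bullet> (A *v y)"
  shows "transpose A = A"
proof -
  have "(transpose A *v x - A *v x) \<bullet> y = 0" for x y
    using assms[of x y] dot_lmul_matrix[of x A y] by (simp add: inner_diff_left)
  then show ?thesis
    by (metis matrix_eq inner_eq_zero_iff eq_iff_diff_eq_0)
qed

lemma orthogonal_projection_matrix_exists:
  fixes R :: "(real^'n) set"
  assumes "subspace R"
  obtains P :: "real^'n^'n"
  where "transpose P = P" "\<And>x. P *v x \<in> R" "\<And>y. y \<in> R \<Longrightarrow> P *v y = y"
    "\<And>x y. y \<in> R \<Longrightarrow> (x - P *v x) \<bullet> y = 0"
proof -
  obtain B where B: "B \<subseteq> R" "pairwise orthogonal B" "span B = R"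
    using orthogonal_basis_subspace[OF assms] by metis
  define p where "p x = (\<Sum>b\<in>B. (b \<bullet> x / (b \<bullet> b)) *\<^sub>R b)" for x
  have "linear p"
    by (rule linearI) (simp_all add: p_def inner_add_right add_divide_distrib scaleR_add_left
        sum.distrib scaleR_sum_right)
  then have P: "matrix p *v x = p x" for x
    by (simp add: matrix_works)
  have pR: "p x \<in> R" for x
  proof -
    have "p x \<in> span B" unfolding p_def by (intro span_sum span_mul span_base)
    then show ?thesis using B(3) by simp
  qed
  have porth: "(x - p x) \<bullet> y = 0" if "y \<in> R" for x y
    using Gram_Schmidt_step[OF B(2), of y x] that B(3)
    by (simp add: p_def orthogonal_def inner_commute)
  have pfix: "p y = y" if "y \<in> R" for y
  proof -
    have "y - p y \<in> R" using that pR assms by (simp add: subspace_diff)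
    then show ?thesis using porth by (metis inner_eq_zero_iff eq_iff_diff_eq_0)
  qed
  have "p x \<bullet> y = x \<bullet> p y" for x y
  proof -
    have "p x \<bullet> (y - p y) = 0" "(x - p x) \<bullet> p y = 0"
      using porth pR by (auto simp: inner_commute)
    then show ?thesis by (simp add: inner_diff_left inner_diff_right)
  qed
  then have "transpose (matrix p) = matrix p"
    by (intro symmetric_matrixI) (simp add: P)
  with that show ?thesis
    using pR pfix porth by (simp add: P)
qed

lemma is_pinv_unique:
  fixes A X Y :: "real^'n^'n"
  assumes X: "is_pinv A X" and Y: "is_pinv A Y"
  shows "X = Y"
proof -
  from X have X1: "A ** X ** A = A" and X2: "X ** A ** X = X" and X3: "transpose (A ** X) = A ** X"
    and X4: "transpose (X ** A) = X ** A" by (auto simp: is_pinv_def)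
  from Y have Y1: "A ** Y ** A = A" and Y2: "Y ** A ** Y = Y" and Y3: "transpose (A ** Y) = A ** Y"
    and Y4: "transpose (Y ** A) = Y ** A" by (auto simp: is_pinv_def)
  have "X = X ** (A ** X)" using X2 by (simp add: matrix_mul_assoc)
  also have "\<dots> = X ** transpose X ** transpose A" using X3 by (metis matrix_transpose_mul matrix_mul_assoc)
  also have "\<dots> = X ** transpose X ** transpose (A ** Y ** A)" using Y1 by simp
  also have "\<dots> = X ** transpose (A ** X) ** transpose (A ** Y)"
    by (simp add: matrix_transpose_mul matrix_mul_assoc)
  also have "\<dots> = X ** A ** Y" using X2 X3 Y3 by (simp add: matrix_mul_assoc)
  finally have eX: "X = X ** A ** Y" .
  have "Y = (Y ** A) ** Y" using Y2 by simp
  also have "\<dots> = transpose A ** transpose Y ** Y" using Y4 by (metis matrix_transpose_mul)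
  also have "\<dots> = transpose (A ** X ** A) ** transpose Y ** Y" using X1 by simp
  also have "\<dots> = transpose (X ** A) ** transpose (Y ** A) ** Y"
    by (simp add: matrix_transpose_mul matrix_mul_assoc)
  also have "\<dots> = X ** A ** (Y ** A ** Y)" using X4 Y4 by (simp add: matrix_mul_assoc)
  also have "\<dots> = X ** A ** Y" using Y2 by simp
  finally show ?thesis using eX by simp
qed

text \<open>For symmetric \<open>A\<close>, a pseudoinverse is \<open>g \<circ> P\<close>, where \<open>P\<close> is the orthogonal projection
  onto the range of \<open>A\<close> and \<open>g\<close> inverts \<open>A\<close> on that range.\<close>

lemma is_pinv_exists:
  fixes A :: "real^'n^'n"
  assumes sym: "transpose A = A"
  shows "\<exists>X. is_pinv A X"
proof -
  define R where "R = range (\<lambda>x. A *v x)"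
  have R: "subspace R" unfolding R_def
    by (rule linear_subspace_image) (auto simp: matrix_vector_mul_linear)
  obtain P where Psym: "transpose P = P" and PR: "\<And>x. P *v x \<in> R"
    and Pfix: "\<And>y. y \<in> R \<Longrightarrow> P *v y = y" and Porth: "\<And>x y. y \<in> R \<Longrightarrow> (x - P *v x) \<bullet> y = 0"
    using orthogonal_projection_matrix_exists[OF R] by metis
  have AP: "A *v (P *v x) = A *v x" for x
  proof -
    have "(A *v (x - P *v x)) \<bullet> (A *v (x - P *v x)) = 0"
      using Porth symmetric_matrix_inner[OF sym] by (simp add: R_def)
    then show ?thesis by (simp add: matrix_vector_mult_diff_distrib)
  qed
  have inj: "inj_on (\<lambda>x. A *v x) R"
  proof (rule inj_onI)
    fix x y assume "x \<in> R" "y \<in> R" "A *v x = A *v y"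
    have "x - y \<in> R" using R \<open>x \<in> R\<close> \<open>y \<in> R\<close> by (simp add: subspace_diff)
    then obtain u where u: "x - y = A *v u" by (auto simp: R_def)
    have "A *v (x - y) = 0"
      using \<open>A *v x = A *v y\<close> by (simp add: matrix_vector_mult_diff_distrib)
    then have "(x - y) \<bullet> (x - y) = 0"
      using symmetric_matrix_inner[OF sym, of u "x - y"] by (simp add: u)
    then show "x = y" by simp
  qed
  then obtain g where g: "range g \<subseteq> R" "linear g" "\<And>y. y \<in> R \<Longrightarrow> g (A *v y) = y"
    using linear_exists_left_inverse_on[OF _ R inj] by (auto simp: matrix_vector_mul_linear)
  define X where "X = matrix g ** P"
  have X: "X *v x = g (P *v x)" for x
    using g(2) by (simp add: X_def matrix_works flip: matrix_vector_mul_assoc)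
  have AX: "A ** X = P"
  proof -
    have "A *v g (P *v x) = P *v x" for x
    proof -
      obtain u where u: "P *v x = A *v u" using PR[of x] by (auto simp: R_def)
      then have "g (P *v x) = P *v u" using g(3)[OF PR[of u]] AP by simp
      then show ?thesis using AP u by simp
    qed
    then show ?thesis by (simp add: matrix_eq X flip: matrix_vector_mul_assoc)
  qed
  have XA: "X ** A = P"
  proof -
    have "g (P *v (A *v x)) = P *v x" for x
      using g(3)[OF PR] AP Pfix by (simp add: R_def)
    then show ?thesis by (simp add: matrix_eq X flip: matrix_vector_mul_assoc)
  qed
  have PX: "P ** X = X"
    using g(1) Pfix by (simp add: matrix_eq X image_subset_iff flip: matrix_vector_mul_assoc)
  have "A ** X ** A = A"
    using Pfix by (simp add: AX matrix_eq R_def flip: matrix_vector_mul_assoc)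
  moreover have "X ** A ** X = X" by (simp add: XA PX)
  ultimately have "is_pinv A X"
    unfolding is_pinv_def by (simp add: AX XA Psym)
  then show ?thesis ..
qed

lemma pinv_is_pinv:
  fixes A :: "real^'n^'n"
  assumes "transpose A = A"
  shows "is_pinv A (pinv A)"
  unfolding pinv_def using is_pinv_exists[OF assms] is_pinv_unique by (metis theI)

lemma pinv_mult_right_support:
  fixes A D :: "real^'n^'n"
  assumes sym: "transpose A = A" and AD: "A ** D = A"
  shows "pinv A ** D = pinv A"
proof -
  let ?P = "pinv A"
  have "?P ** A ** ?P = ?P" and AP: "transpose (A ** ?P) = A ** ?P"
    using pinv_is_pinv[OF sym] unfolding is_pinv_def by auto
  then have "?P = ?P ** transpose (A ** ?P)"
    using AP by (simp add: matrix_mul_assoc)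
  also have "\<dots> = ?P ** transpose ?P ** A"
    by (simp add: matrix_transpose_mul sym matrix_mul_assoc)
  finally have P: "?P = ?P ** transpose ?P ** A" .
  have "?P ** D = (?P ** transpose ?P ** A) ** D"
    by (rule arg_cong[OF P])
  also have "\<dots> = ?P ** transpose ?P ** (A ** D)"
    by (simp only: matrix_mul_assoc)
  also have "\<dots> = ?P"
    by (simp only: AD P[symmetric])
  finally show ?thesis .
qed

section \<open>Diagonal 0/1 matrices and incidence matrices\<close>

lemma matrix_add_rdistrib: "((A::'a::semiring_1^'n^'m) + B) ** C = A ** C + B ** C"
  by (simp add: matrix_matrix_mult_def vec_eq_iff algebra_simps sum.distrib)

lemma matrix_diff_rdistrib: "((A::'a::ring_1^'n^'m) - B) ** C = A ** C - B ** C"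
  by (simp add: matrix_matrix_mult_def vec_eq_iff algebra_simps sum_subtractf)

lemma sum_list_map_case_prod_mult:
  "sum_list (map (\<lambda>(x, y). f x y ** C) xs) = sum_list (map (\<lambda>(x, y). f x y) xs) ** (C::real^'n^'m)"
  by (induction xs) (auto simp: matrix_add_rdistrib)

lemma transpose_add: "transpose ((A::'a::plus^'n^'m) + B) = transpose A + transpose B"
  by (simp add: transpose_def vec_eq_iff)

lemma transpose_diff: "transpose ((A::'a::ab_group_add^'n^'m) - B) = transpose A - transpose B"
  by (simp add: transpose_def vec_eq_iff)

lemma transpose_zero [simp]: "transpose (0::'a::zero^'n^'m) = 0"
  by (simp add: transpose_def vec_eq_iff)

lemma idS_mult_component: "(idS A ** M) $ i $ j = (if i \<in> A then M $ i $ j else 0)"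
  by (simp add: matrix_matrix_mult_def idS_def if_distrib if_distribR sum.delta cong: if_cong)

lemma transpose_idS [simp]: "transpose (idS A) = idS A"
  by (auto simp: idS_def vec_eq_iff transpose_def)

lemma mult_idS_component: "(M ** idS A) $ i $ j = (if j \<in> A then M $ i $ j else 0)"
proof -
  have "M ** idS A = transpose (idS A ** transpose M)"
    by (simp add: matrix_transpose_mul)
  then show ?thesis by (simp add: transpose_def idS_mult_component)
qed

lemma idS_mult_idS: "idS A ** idS B = idS (A \<inter> B)"
  by (simp add: vec_eq_iff idS_mult_component) (simp add: idS_def)

lemma idS_empty [simp]: "idS {} = 0"
  by (simp add: idS_def vec_eq_iff)

lemma idS_Un: "A \<inter> B = {} \<Longrightarrow> idS (A \<union> B) = idS A + idS B"
  by (auto simp: idS_def vec_eq_iff)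

lemma idS_mult_eq_0:
  assumes "A \<inter> B = {}" "idS B ** M = M"
  shows "idS A ** M = 0"
  by (metis assms idS_empty idS_mult_idS matrix_mul_assoc times0_left)

lemma idS_mult_submat: "idS S ** submat M S T = submat M S T"
  by (simp add: vec_eq_iff idS_mult_component) (simp add: submat_def)

lemma submat_mult_idS: "submat M S T ** idS T = submat M S T"
  by (simp add: vec_eq_iff mult_idS_component) (simp add: submat_def)

lemma transpose_submat: "transpose (submat M S T) = submat (transpose M) T S"
  by (simp add: submat_def transpose_def vec_eq_iff)

lemma verts_mono: "A \<subseteq> B \<Longrightarrow> verts ends A \<subseteq> verts ends B"
  by (auto simp: verts_def)

lemma incidence_on_mult_idS:
  assumes "verts ends Es \<subseteq> S"
  shows "incidence_on ends Es ** idS S = incidence_on ends Es"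
proof -
  have "incidence_on ends Es $ e $ v = 0" if "v \<notin> S" for e v
    using assms that by (auto simp: incidence_on_def incidence_def verts_def)
  then show ?thesis by (simp add: vec_eq_iff mult_idS_component)
qed

lemma incidence_on_Un:
  "A \<inter> B = {} \<Longrightarrow> incidence_on ends (A \<union> B) = incidence_on ends A + incidence_on ends B"
  by (auto simp: incidence_on_def vec_eq_iff)

lemma incidence_on_UNIV: "incidence_on ends UNIV = incidence ends"
  by (simp add: incidence_on_def vec_eq_iff)

section \<open>Separator trees\<close>

lemma elim_Int_bd: "elim ends b H \<inter> b = {}"
  by (cases H) auto

lemma elim_subset_verts: "sep_wf ends H \<Longrightarrow> elim ends b H \<subseteq> verts ends (region H)"
  by (cases H) (auto simp: verts_def)

lemma mem_nodes_SNodeE: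
  assumes "x \<in> set (nodes ends bd (SNode Es S D1 D2))"
  obtains "x = (bd, SNode Es S D1 D2)"
  | "x \<in> set (nodes ends (child_bd ends bd S D1) D1)"
  | "x \<in> set (nodes ends (child_bd ends bd S D2) D2)"
  using assms by auto

lemma nodes_lvl_le: "(b, H) \<in> set (nodes ends bd T) \<Longrightarrow> lvl H \<le> lvl T"
proof (induction T arbitrary: bd)
  case (SNode Es S D1 D2)
  from SNode.prems show ?case
    by (cases rule: mem_nodes_SNodeE) (auto dest: SNode.IH)
qed simp

lemma nodes_lvl_less:
  "(b, H) \<in> set (nodes ends bd T) \<Longrightarrow> (b, H) = (bd, T) \<or> lvl H < lvl T"
  by (cases T) (auto dest!: nodes_lvl_le simp: less_Suc_eq_le)

lemma nodes_subtree:
  "sep_wf ends T \<Longrightarrow> (b, H) \<in> set (nodes ends bd T) \<Longrightarrow> sep_wf ends H \<and> region H \<subseteq> region T"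
  by (induction T arbitrary: bd) auto

lemma elim_nodes_subset:
  "sep_wf ends T \<Longrightarrow> (b, H) \<in> set (nodes ends bd T) \<Longrightarrow> elim ends b H \<subseteq> verts ends (region T)"
  by (meson elim_subset_verts nodes_subtree order_trans verts_mono)

lemma nodes_bd_subset:
  "sep_wf ends T \<Longrightarrow> (b, H) \<in> set (nodes ends bd T) \<Longrightarrow> b \<subseteq> bd \<union> verts ends (region T)"
proof (induction T arbitrary: bd)
  case (SNode Es S D1 D2)
  have wf: "sep_wf ends D1" "sep_wf ends D2" and Es: "Es = region D1 \<union> region D2"
    using SNode.prems(1) by auto
  then have "verts ends (region D1) \<subseteq> verts ends Es" "verts ends (region D2) \<subseteq> verts ends Es"
    by (simp_all add: verts_mono)
  with SNode.prems(2) show ?case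
    by (cases rule: mem_nodes_SNodeE) (auto simp: child_bd_def dest!: SNode.IH(1)[OF wf(1)] SNode.IH(2)[OF wf(2)])
qed simp

lemma elim_nodes_Int_bd:
  "sep_wf ends T \<Longrightarrow> (b, H) \<in> set (nodes ends bd T) \<Longrightarrow> elim ends b H \<inter> bd = {}"
proof (induction T arbitrary: bd)
  case (SNode Es S D1 D2)
  have "elim ends b H \<inter> bd \<subseteq> elim ends b H \<inter> child_bd ends bd S D"
    if "sep_wf ends D" "(b, H) \<in> set (nodes ends (child_bd ends bd S D) D)" for D
    using elim_nodes_subset[OF that] by (auto simp: child_bd_def)
  with SNode show ?case by auto blast+
qed auto

lemma elim_child_nodes_subset:
  assumes "sep_wf ends D" "(b, H) \<in> set (nodes ends (child_bd ends bd S D) D)"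
  shows "elim ends b H \<subseteq> verts ends (region D) - (bd \<union> S)"
  using elim_nodes_subset[OF assms] elim_nodes_Int_bd[OF assms] by (auto simp: child_bd_def)

lemma bd_child_nodes_subset:
  assumes "sep_wf ends D" "(b, H) \<in> set (nodes ends (child_bd ends bd S D) D)"
  shows "b \<subseteq> verts ends (region D)"
  using nodes_bd_subset[OF assms] by (auto simp: child_bd_def)

lemma nodes_elim_pairwise_disjoint:
  "sep_wf ends T \<Longrightarrow>
   sorted_wrt (\<lambda>(b, H) (b', H'). elim ends b H \<inter> elim ends b' H' = {}) (nodes ends bd T)"
proof (induction T arbitrary: bd)
  case (SNode Es S D1 D2)
  have wf: "sep_wf ends D1" "sep_wf ends D2"
    and S: "verts ends (region D1) \<inter> verts ends (region D2) = S"
    using SNode.prems by auto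
  note F1 = elim_child_nodes_subset[OF wf(1)] and F2 = elim_child_nodes_subset[OF wf(2)]
  show ?case
    using SNode.IH(1)[OF wf(1)] SNode.IH(2)[OF wf(2)] S
    by (fastforce simp: sorted_wrt_append dest!: F1 F2)
qed simp

lemma bd_Int_elim_nodes:
  assumes "sep_wf ends T" "(b, H) \<in> set (nodes ends bd T)" "(b', H') \<in> set (nodes ends bd T)"
    and "lvl H' \<le> lvl H"
  shows "b \<inter> elim ends b' H' = {}"
  using assms
proof (induction T arbitrary: bd)
  case (SNode Es S D1 D2)
  have wf: "sep_wf ends D1" "sep_wf ends D2"
    and S: "verts ends (region D1) \<inter> verts ends (region D2) = S"
    using SNode.prems by auto
  note F1 = elim_child_nodes_subset[OF wf(1)] and F2 = elim_child_nodes_subset[OF wf(2)]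
  note B1 = bd_child_nodes_subset[OF wf(1)] and B2 = bd_child_nodes_subset[OF wf(2)]
  note lvl1 = nodes_lvl_le[where T = D1] and lvl2 = nodes_lvl_le[where T = D2]
  from SNode.prems(2) show ?case
  proof (cases rule: mem_nodes_SNodeE)
    case 1
    then show ?thesis using elim_nodes_Int_bd[OF SNode.prems(1,3)] by auto
  next
    case 2
    from SNode.prems(3) show ?thesis
      by (cases rule: mem_nodes_SNodeE)
        (use 2 SNode.IH(1)[OF wf(1) 2] SNode.prems(4) lvl1 B1 F2 S in fastforce)+
  next
    case 3
    from SNode.prems(3) show ?thesis
      by (cases rule: mem_nodes_SNodeE)
        (use 3 SNode.IH(2)[OF wf(2) 3] SNode.prems(4) lvl2 B2 F1 S in fastforce)+
  qed
qed auto

section \<open>Level sums and the backward sweep\<close>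

definition level_sum ::
  "('v set \<Rightarrow> ('v, 'e) stree \<Rightarrow> 'a::monoid_add) \<Rightarrow> nat \<Rightarrow> ('v set \<times> ('v, 'e) stree) list \<Rightarrow> 'a" where
  "level_sum Y i xs = sum_list [Y b H. (b, H) \<leftarrow> xs, lvl H = i]"

lemma level_sum_Nil [simp]: "level_sum Y i [] = 0"
  by (simp add: level_sum_def)

lemma level_sum_Cons [simp]:
  "level_sum Y i ((b, H) # xs) = (if lvl H = i then Y b H else 0) + level_sum Y i xs"
  by (simp add: level_sum_def)

lemma transpose_level_sum:
  "transpose (level_sum Y i xs) = level_sum (\<lambda>b H. transpose (Y b H)) i xs"
  by (induction xs) (auto simp: transpose_add)

lemma idS_mult_level_sum_eq_0:
  assumes "\<forall>(b, H) \<in> set xs. lvl H = i \<longrightarrow> A \<inter> elim ends b H = {}"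
    and "\<forall>(b, H) \<in> set xs. idS (elim ends b H) ** Y b H = Y b H"
  shows "idS A ** level_sum Y i xs = 0"
  using assms
proof (induction xs)
  case (Cons x xs)
  obtain b H where x: "x = (b, H)" by fastforce
  have "idS A ** (if lvl H = i then Y b H else 0) = 0"
    using Cons.prems x idS_mult_eq_0[of A "elim ends b H" "Y b H"] by auto
  then show ?case using Cons by (simp add: x matrix_add_ldistrib)
qed simp

lemma idS_elim_mult_level_sum:
  assumes "sorted_wrt (\<lambda>(b, H) (b', H'). elim ends b H \<inter> elim ends b' H' = {}) xs"
    and "\<forall>(b, H) \<in> set xs. idS (elim ends b H) ** Y b H = Y b H"
    and "(b, H) \<in> set xs"
  shows "idS (elim ends b H) ** level_sum Y i xs = (if lvl H = i then Y b H else 0)"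
  using assms
proof (induction xs)
  case (Cons x xs)
  obtain b0 H0 where x: "x = (b0, H0)" by fastforce
  show ?case
  proof (cases "(b, H) = x")
    case True
    have "idS (elim ends b H) ** level_sum Y i xs = 0"
      using Cons.prems(1,2) True by (intro idS_mult_level_sum_eq_0) auto
    then show ?thesis using Cons.prems(2) True by (auto simp: matrix_add_ldistrib)
  next
    case False
    have "idS (elim ends b H) ** Y b0 H0 = 0"
      using Cons.prems False x by (intro idS_mult_eq_0[where B = "elim ends b0 H0"]) auto
    moreover have "(b, H) \<in> set xs" using Cons.prems(3) False by auto
    ultimately show ?thesis using Cons.IH Cons.prems(1,2) x by (simp add: matrix_add_ldistrib)
  qed
qed simp

lemma idS_elim_mult_level_sum_nodes:
  assumes "sep_wf ends T" "\<forall>(b, H) \<in> set (nodes ends bd T). idS (elim ends b H) ** Y b H = Y b H"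
    and "(b, H) \<in> set (nodes ends bd T)"
  shows "idS (elim ends b H) ** level_sum Y i (nodes ends bd T) = (if lvl H = i then Y b H else 0)"
  using idS_elim_mult_level_sum[OF nodes_elim_pairwise_disjoint[OF assms(1)] assms(2,3)] .

lemma idS_bd_mult_level_sum_nodes:
  assumes "sep_wf ends T" "\<forall>(b, H) \<in> set (nodes ends bd T). idS (elim ends b H) ** Y b H = Y b H"
    and "(b, H) \<in> set (nodes ends bd T)" "i \<le> lvl H"
  shows "idS b ** level_sum Y i (nodes ends bd T) = 0"
  using assms bd_Int_elim_nodes[OF assms(1,3)] by (intro idS_mult_level_sum_eq_0) auto

lemma matrix_vector_mult_const_upto:
  fixes zz :: "nat \<Rightarrow> real^'n" and Sig :: "nat \<Rightarrow> real^'n^'n"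
  assumes "a \<le> c"
    and "\<And>j. a \<le> j \<Longrightarrow> j < c \<Longrightarrow> zz j = zz (Suc j) - Sig j *v zz (Suc j)"
    and "\<And>j. a \<le> j \<Longrightarrow> j < c \<Longrightarrow> M ** Sig j = 0"
  shows "M *v zz a = M *v zz c"
  using assms
proof (induction c rule: dec_induct)
  case (step c)
  then have "M *v zz c = M *v zz (Suc c)"
    by (simp add: matrix_vector_mult_diff_distrib matrix_vector_mul_assoc)
  with step show ?case by simp
qed simp

text \<open>Among the steps \<open>zz j = (I - Sig j) zz (j+1)\<close>, only the one at \<open>j = k\<close> moves the \<open>C\<close>-rows, and
  \<open>Y\<close> only reads the \<open>Bd\<close>-rows, which are frozen at all steps up to \<open>k\<close>.\<close>

lemma sweep_node_identity:
  fixes zz :: "nat \<Rightarrow> real^'n" and Sig :: "nat \<Rightarrow> real^'n^'n"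
  assumes step: "\<And>j. j < n \<Longrightarrow> zz j = zz (Suc j) - Sig j *v zz (Suc j)"
    and rows: "\<And>j. j < n \<Longrightarrow> C ** Sig j = (if k = j then Y else 0)"
    and cols: "\<And>j. j \<le> k \<Longrightarrow> Bd ** Sig j = 0"
    and Y: "Y ** Bd = Y"
    and k: "k < n \<or> Y = 0"
  shows "C *v zz 0 = C *v zz n - Y *v zz 0"
  using k
proof
  assume k: "k < n"
  have "C *v zz 0 = C *v zz k"
    using step rows k by (intro matrix_vector_mult_const_upto[where Sig = Sig]) auto
  also have "\<dots> = C *v zz (Suc k) - Y *v zz (Suc k)"
    using step[OF k] rows[OF k] by (simp add: matrix_vector_mult_diff_distrib matrix_vector_mul_assoc)
  also have "C *v zz (Suc k) = C *v zz n"
    using step rows k by (intro matrix_vector_mult_const_upto[where Sig = Sig]) auto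
  also have "Y *v zz (Suc k) = Y *v zz 0"
  proof -
    have "Bd *v zz 0 = Bd *v zz (Suc k)"
      using step cols k by (intro matrix_vector_mult_const_upto[where Sig = Sig]) auto
    then have "(Y ** Bd) *v zz (Suc k) = (Y ** Bd) *v zz 0"
      by (simp flip: matrix_vector_mul_assoc)
    then show ?thesis by (simp only: Y)
  qed
  finally show ?thesis .
next
  assume "Y = 0"
  then show ?thesis
    using step rows by (simp add: matrix_vector_mult_const_upto)
qed

lemma elim_sweep_identity:
  fixes ends :: "'e \<Rightarrow> 'v::finite \<times> 'v" and z :: "real^'v"
  assumes wf: "sep_wf ends T"
    and rows: "\<forall>(b, H) \<in> set (nodes ends {} T). idS (elim ends b H) ** Y b H = Y b H"
    and cols: "\<forall>(b, H) \<in> set (nodes ends {} T). Y b H ** idS b = Y b H"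
    and H: "(b, H) \<in> set (nodes ends {} T)"
  defines "u \<equiv> foldr (\<lambda>i A. (mat 1 - level_sum Y i (nodes ends {} T)) ** A) [0..<lvl T] (mat 1) *v z"
  shows "idS (elim ends b H) *v u = idS (elim ends b H) *v z - Y b H *v u"
proof -
  define zz where
    "zz j = foldr (\<lambda>i A. (mat 1 - level_sum Y i (nodes ends {} T)) ** A) [j..<lvl T] (mat 1) *v z" for j
  from nodes_lvl_less[OF H] have root: "lvl H < lvl T \<or> Y b H = 0"
  proof
    assume "(b, H) = ({}, T)"
    then have "Y b H = Y b H ** idS {}" using cols H by auto
    then show ?thesis by simp
  qed simp
  have "idS (elim ends b H) *v zz 0 = idS (elim ends b H) *v zz (lvl T) - Y b H *v zz 0"
  proof (rule sweep_node_identity)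
    show "zz j = zz (Suc j) - level_sum Y j (nodes ends {} T) *v zz (Suc j)" if "j < lvl T" for j
      using upt_conv_Cons[OF that]
      by (simp add: zz_def matrix_vector_mult_diff_rdistrib flip: matrix_vector_mul_assoc)
    show "idS (elim ends b H) ** level_sum Y j (nodes ends {} T) = (if lvl H = j then Y b H else 0)" for j
      by (rule idS_elim_mult_level_sum_nodes[OF wf rows H])
    show "idS b ** level_sum Y j (nodes ends {} T) = 0" if "j \<le> lvl H" for j
      by (rule idS_bd_mult_level_sum_nodes[OF wf rows H that])
    show "Y b H ** idS b = Y b H" using cols H by fast
  qed (fact root)
  then show ?thesis by (simp add: zz_def u_def)
qed

section \<open>The slack tree operator\<close>

lemma transpose_Xop_mult_idS_bd:
  "transpose (Xop ends L b H) ** idS b = transpose (Xop ends L b H)"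
proof -
  let ?S = "submat (L (region H)) b (elim ends b H)"
  have "transpose ?S ** idS b = transpose ?S"
    using arg_cong[OF idS_mult_submat[of b "L (region H)" "elim ends b H"], of transpose]
    by (simp add: matrix_transpose_mul)
  then show ?thesis
    by (simp add: Xop_def matrix_transpose_mul flip: matrix_mul_assoc)
qed

lemma idS_elim_mult_transpose_Xop:
  assumes "transpose (L (region H)) = L (region H)"
  shows "idS (elim ends b H) ** transpose (Xop ends L b H) = transpose (Xop ends L b H)"
proof -
  let ?F = "elim ends b H"
  let ?A = "submat (L (region H)) ?F ?F"
  have "transpose ?A = ?A"
    using assms by (simp add: transpose_submat)
  then have "pinv ?A ** idS ?F = pinv ?A"
    by (rule pinv_mult_right_support) (rule submat_mult_idS)
  then have "transpose (pinv ?A ** idS ?F) = transpose (pinv ?A)"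
    by simp
  then have "idS ?F ** transpose (pinv ?A) = transpose (pinv ?A)"
    by (simp add: matrix_transpose_mul)
  then show ?thesis
    by (simp add: Xop_def matrix_transpose_mul matrix_mul_assoc)
qed

lemma transpose_PiOp:
  "transpose (PiOp ends L T i) = mat 1 - level_sum (\<lambda>b H. transpose (Xop ends L b H)) i (nodes ends {} T)"
proof -
  have "PiOp ends L T i = mat 1 - level_sum (Xop ends L) i (nodes ends {} T)"
    by (simp add: PiOp_def level_sum_def)
  then show ?thesis by (simp add: transpose_diff transpose_level_sum)
qed

text \<open>\<open>subtree_op ends w L b A\<close> is the paper's sum of \<open>J_H M_(H<-A)\<close> over the leaves \<open>H\<close> below \<open>A\<close>.\<close>

fun subtree_op ::
  "('e::finite \<Rightarrow> 'v::finite \<times> 'v) \<Rightarrow> ('e \<Rightarrow> real) \<Rightarrow> ('e set \<Rightarrow> real^'v^'v) \<Rightarrow> 'v set \<Rightarrow> ('v, 'e) stree \<Rightarrow> real^'v^'e"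
where
  "subtree_op ends w L b (SLeaf Es) = Jleaf ends w Es"
| "subtree_op ends w L b (SNode Es S D1 D2) =
     subtree_op ends w L (child_bd ends b S D1) D1 ** Medge ends L (child_bd ends b S D1) D1 +
     subtree_op ends w L (child_bd ends b S D2) D2 ** Medge ends L (child_bd ends b S D2) D2"

lemma sum_down_eq_subtree_op:
  "sum_list (map (\<lambda>(H, P). Jleaf ends w H ** P) (down ends L b T)) = subtree_op ends w L b T"
proof (induction T arbitrary: b)
  case (SNode Es S D1 D2)
  have map_down: "map (\<lambda>(H, P). Jleaf ends w H ** P) (map (\<lambda>(H, P). (H, P ** M)) xs)
      = map (\<lambda>(H, P). Jleaf ends w H ** P ** M) xs" for xs and M :: "real^'v^'v"
    by (induction xs) (auto simp: matrix_mul_assoc)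
  show ?case
    by (simp only: down.simps subtree_op.simps map_append sum_list_append map_down
        sum_list_map_case_prod_mult SNode.IH)
qed simp

lemma slack_op_eq_sum_subtree_op:
  "slack_op ends w L T = sum_list [subtree_op ends w L b A ** idS (elim ends b A). (b, A) \<leftarrow> nodes ends {} T]"
  unfolding slack_op_def sum_list_map_case_prod_mult sum_down_eq_subtree_op ..

lemma Medge_mult_idS_parent:
  assumes "sep_wf ends D"
  shows "Medge ends L (child_bd ends b S D) D ** idS (b \<union> S)
         = idS (child_bd ends b S D) - transpose (Xop ends L (child_bd ends b S D) D)"
proof -
  let ?c = "child_bd ends b S D"
  let ?Y = "transpose (Xop ends L ?c D)"
  have "(?c \<union> elim ends ?c D) \<inter> (b \<union> S) = ?c"
    using elim_subset_verts[OF assms, of ?c] elim_Int_bd[of ends ?c D] by (auto simp: child_bd_def)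
  moreover have "?Y ** idS (b \<union> S) = ?Y"
  proof -
    have "?c \<inter> (b \<union> S) = ?c" by (auto simp: child_bd_def)
    then have "?Y ** idS ?c ** idS (b \<union> S) = ?Y ** idS ?c"
      by (simp add: idS_mult_idS flip: matrix_mul_assoc)
    then show ?thesis by (simp only: transpose_Xop_mult_idS_bd)
  qed
  ultimately show ?thesis
    by (simp add: Medge_def matrix_diff_rdistrib idS_mult_idS)
qed

lemma idS_Un_mult_identity:
  fixes u z :: "real^'n"
  assumes "F \<inter> b = {}" "idS F *v u = idS F *v z - Y *v u"
  shows "idS F *v z + (idS b *v u - Y *v u) = idS (b \<union> F) *v u"
  using assms by (simp add: idS_Un matrix_vector_mult_add_rdistrib Int_commute)

lemma slack_telescope:
  fixes ends :: "'e::finite \<Rightarrow> 'v::finite \<times> 'v"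
  assumes "sep_wf ends A"
    and "\<forall>(b', H') \<in> set (nodes ends b A).
           idS (elim ends b' H') *v u = idS (elim ends b' H') *v z - transpose (Xop ends L b' H') *v u"
  shows "sum_list [subtree_op ends w L b' H' ** idS (elim ends b' H'). (b', H') \<leftarrow> nodes ends b A] *v z
         + subtree_op ends w L b A *v (idS b *v u - transpose (Xop ends L b A) *v u)
         = (sqrtW w ** incidence_on ends (region A)) *v u"
  using assms
proof (induction A arbitrary: b)
  case (SLeaf Es)
  let ?F = "elim ends b (SLeaf Es)"
  have split: "idS ?F *v z + (idS b *v u - transpose (Xop ends L b (SLeaf Es)) *v u) = idS (b \<union> ?F) *v u"
    using SLeaf.prems(2) by (intro idS_Un_mult_identity) auto
  have inc: "incidence_on ends Es ** idS (b \<union> ?F) = incidence_on ends Es"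
    by (rule incidence_on_mult_idS) auto
  have "sum_list [subtree_op ends w L b' H' ** idS (elim ends b' H'). (b', H') \<leftarrow> nodes ends b (SLeaf Es)] *v z
        + subtree_op ends w L b (SLeaf Es) *v (idS b *v u - transpose (Xop ends L b (SLeaf Es)) *v u)
      = Jleaf ends w Es *v (idS ?F *v z + (idS b *v u - transpose (Xop ends L b (SLeaf Es)) *v u))"
    by (simp only: nodes.simps subtree_op.simps list.map sum_list_simps prod.case add_0_right
        matrix_vector_right_distrib matrix_vector_mul_assoc)
  also have "\<dots> = (sqrtW w ** incidence_on ends Es) *v u"
    by (simp only: split Jleaf_def matrix_vector_mul_assoc inc flip: matrix_mul_assoc)
  finally show ?case by simp
next
  case (SNode Es S D1 D2)
  let ?A = "SNode Es S D1 D2"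
  let ?c1 = "child_bd ends b S D1" and ?c2 = "child_bd ends b S D2"
  let ?sum = "\<lambda>c D. sum_list [subtree_op ends w L b' H' ** idS (elim ends b' H'). (b', H') \<leftarrow> nodes ends c D]"
  let ?tail = "\<lambda>c D. subtree_op ends w L c D *v (idS c *v u - transpose (Xop ends L c D) *v u)"
  have wf: "sep_wf ends D1" "sep_wf ends D2"
    and Es: "region D1 \<union> region D2 = Es" "region D1 \<inter> region D2 = {}"
    using SNode.prems(1) by auto
  have split: "idS (S - b) *v z + (idS b *v u - transpose (Xop ends L b ?A) *v u) = idS (b \<union> S) *v u"
  proof -
    have "idS (S - b) *v u = idS (S - b) *v z - transpose (Xop ends L b ?A) *v u"
      using SNode.prems(2) by (simp del: transpose_matrix_vector)
    from idS_Un_mult_identity[OF _ this, of b] show ?thesis by (simp add: Int_commute)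
  qed
  have "?sum b ?A *v z + ?tail b ?A
      = subtree_op ends w L b ?A *v (idS (b \<union> S) *v u) + ?sum ?c1 D1 *v z + ?sum ?c2 D2 *v z"
    by (simp add: split[symmetric] matrix_vector_mult_add_rdistrib matrix_vector_right_distrib
        flip: matrix_vector_mul_assoc)
  also have "\<dots> = (subtree_op ends w L b ?A ** idS (b \<union> S)) *v u + ?sum ?c1 D1 *v z + ?sum ?c2 D2 *v z"
    by (simp only: matrix_vector_mul_assoc)
  also have "\<dots> = (?sum ?c1 D1 *v z + ?tail ?c1 D1) + (?sum ?c2 D2 *v z + ?tail ?c2 D2)"
    by (simp add: Medge_mult_idS_parent[OF wf(1)] Medge_mult_idS_parent[OF wf(2)] matrix_add_rdistrib
        matrix_vector_mult_add_rdistrib matrix_vector_mult_diff_rdistrib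
        flip: matrix_mul_assoc matrix_vector_mul_assoc)
  also have "\<dots> = (sqrtW w ** incidence_on ends (region D1)) *v u + (sqrtW w ** incidence_on ends (region D2)) *v u"
  proof -
    have "?sum ?c1 D1 *v z + ?tail ?c1 D1 = (sqrtW w ** incidence_on ends (region D1)) *v u"
      using SNode.prems(2) by (intro SNode.IH(1)[OF wf(1)]) auto
    moreover have "?sum ?c2 D2 *v z + ?tail ?c2 D2 = (sqrtW w ** incidence_on ends (region D2)) *v u"
      using SNode.prems(2) by (intro SNode.IH(2)[OF wf(2)]) auto
    ultimately show ?thesis by (simp only:)
  qed
  also have "\<dots> = (sqrtW w ** incidence_on ends (region ?A)) *v u"
    by (simp add: Es(1)[symmetric] incidence_on_Un[OF Es(2)] matrix_add_ldistrib matrix_vector_mult_add_rdistrib)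
  finally show ?case .
qed

theorem mainTheorem14:
  fixes ends :: "'e::finite \<Rightarrow> 'v::finite \<times> 'v"
    and w :: "'e \<Rightarrow> real"
    and T :: "('v, 'e) stree"
    and L :: "'e set \<Rightarrow> real^'v^'v"
    and z :: "real^'v"
  assumes no_loops: "\<forall>e. fst (ends e) \<noteq> snd (ends e)"
    and conn: "graph_connected ends"
    and wpos: "\<forall>e. w e > 0"
    and tree: "separator_tree ends T"
    and lap: "\<forall>(bd, H) \<in> set (nodes ends {} T). laplacian_on (bd \<union> elim ends bd H) (L (region H))"
  shows "slack_op ends w L T *v z =
         (sqrtW w ** incidence ends ** foldr (\<lambda>i A. transpose (PiOp ends L T i) ** A) [0..<lvl T] (mat 1)) *v z"
proof -
  let ?Y = "\<lambda>b H. transpose (Xop ends L b H)"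
  define u where "u = foldr (\<lambda>i A. transpose (PiOp ends L T i) ** A) [0..<lvl T] (mat 1) *v z"
  have wf: "sep_wf ends T" and UNIV: "region T = UNIV"
    using tree by (auto simp: separator_tree_def)
  have rows: "\<forall>(b, H) \<in> set (nodes ends {} T). idS (elim ends b H) ** ?Y b H = ?Y b H"
    using lap by (auto simp: laplacian_on_def intro: idS_elim_mult_transpose_Xop)
  have cols: "\<forall>(b, H) \<in> set (nodes ends {} T). ?Y b H ** idS b = ?Y b H"
    by (simp add: transpose_Xop_mult_idS_bd)
  have "idS (elim ends b H) *v u = idS (elim ends b H) *v z - ?Y b H *v u"
    if "(b, H) \<in> set (nodes ends {} T)" for b H
    using elim_sweep_identity[OF wf rows cols that] by (simp only: u_def transpose_PiOp)
  then have "slack_op ends w L T *v z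
      + subtree_op ends w L {} T *v (idS {} *v u - ?Y {} T *v u) = (sqrtW w ** incidence_on ends UNIV) *v u"
    using slack_telescope[OF wf] by (simp only: slack_op_eq_sum_subtree_op UNIV) blast
  moreover have "?Y {} T = 0"
    using transpose_Xop_mult_idS_bd[of ends L "{}" T] by simp
  ultimately show ?thesis
    by (simp add: u_def incidence_on_UNIV matrix_vector_mul_assoc)
qed

end
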